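(* Let $G$ be a BDH graph with color classes $X,Y$, with at least three vertices and no universal vertex. Then $x\in X$ is a cut-vertex of $G$ if and only if $(\{x\},N(x))\in\mathcal{B}(G)$. Analogously, $y\in Y$ is a cut-vertex of $G$ if and only if $(N(y),\{y\})\in\mathcal{B}(G)$.
   Context: A biclique of a bipartite graph is written as the pair $(U,W)$ of its shores, $U\subseteq X$, $W\subseteq Y$, with every vertex of $U$ adjacent to every vertex of $W$; $\mathcal{B}(G)$ is the set of inclusion-wise maximal bicliques. A graph is distance hereditary if distances in every connected induced subgraph equal distances in the graph; BDH means bipartite distance hereditary (equivalently: bipartite, no induced chordless cycle of length $\ge 6$, no induced domino, where a domino is $C_6$ plus a chord between antipodal vertices). A universal vertex is adjacent to all vertices of the opposite color class. *)

theory Defs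
  imports Main
begin

definition graph :: "'a set \<Rightarrow> ('a \<Rightarrow> 'a \<Rightarrow> bool) \<Rightarrow> bool" where
  "graph V E \<longleftrightarrow> finite V \<and> (\<forall>u v. E u v \<longrightarrow> u \<in> V \<and> v \<in> V \<and> E v u \<and> u \<noteq> v)"

definition bipartite :: "'a set \<Rightarrow> ('a \<Rightarrow> 'a \<Rightarrow> bool) \<Rightarrow> 'a set \<Rightarrow> 'a set \<Rightarrow> bool" where
  "bipartite V E X Y \<longleftrightarrow> graph V E \<and> X \<inter> Y = {} \<and> X \<union> Y = V \<and>
     (\<forall>u v. E u v \<longrightarrow> (u \<in> X \<and> v \<in> Y) \<or> (u \<in> Y \<and> v \<in> X))"

text \<open>Walks inside a vertex subset S (walks of the induced subgraph G[S]).\<close>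
definition walk_in :: "'a set \<Rightarrow> ('a \<Rightarrow> 'a \<Rightarrow> bool) \<Rightarrow> 'a list \<Rightarrow> bool" where
  "walk_in S E xs \<longleftrightarrow> xs \<noteq> [] \<and> set xs \<subseteq> S \<and> (\<forall>i. Suc i < length xs \<longrightarrow> E (xs ! i) (xs ! Suc i))"

definition reach :: "'a set \<Rightarrow> ('a \<Rightarrow> 'a \<Rightarrow> bool) \<Rightarrow> 'a \<Rightarrow> 'a \<Rightarrow> bool" where
  "reach S E u v \<longleftrightarrow> (\<exists>xs. walk_in S E xs \<and> hd xs = u \<and> last xs = v)"

definition connected_in :: "'a set \<Rightarrow> ('a \<Rightarrow> 'a \<Rightarrow> bool) \<Rightarrow> bool" where
  "connected_in S E \<longleftrightarrow> S \<noteq> {} \<and> (\<forall>u\<in>S. \<forall>v\<in>S. reach S E u v)"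

text \<open>Distance in the induced subgraph G[S] (number of edges of a shortest walk);
  only meaningful when u and v are connected in G[S].\<close>
definition dist_in :: "'a set \<Rightarrow> ('a \<Rightarrow> 'a \<Rightarrow> bool) \<Rightarrow> 'a \<Rightarrow> 'a \<Rightarrow> nat" where
  "dist_in S E u v = (LEAST n. \<exists>xs. walk_in S E xs \<and> hd xs = u \<and> last xs = v \<and> length xs = Suc n)"

definition distance_hereditary :: "'a set \<Rightarrow> ('a \<Rightarrow> 'a \<Rightarrow> bool) \<Rightarrow> bool" where
  "distance_hereditary V E \<longleftrightarrow>
     (\<forall>S. S \<subseteq> V \<longrightarrow> connected_in S E \<longrightarrow> (\<forall>u\<in>S. \<forall>v\<in>S. dist_in S E u v = dist_in V E u v))"

definition BDH :: "'a set \<Rightarrow> ('a \<Rightarrow> 'a \<Rightarrow> bool) \<Rightarrow> 'a set \<Rightarrow> 'a set \<Rightarrow> bool" where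
  "BDH V E X Y \<longleftrightarrow> bipartite V E X Y \<and> distance_hereditary V E"

definition components :: "'a set \<Rightarrow> ('a \<Rightarrow> 'a \<Rightarrow> bool) \<Rightarrow> 'a set set" where
  "components S E = (\<lambda>u. {v \<in> S. reach S E u v}) ` S"

definition cut_vertex :: "'a set \<Rightarrow> ('a \<Rightarrow> 'a \<Rightarrow> bool) \<Rightarrow> 'a \<Rightarrow> bool" where
  "cut_vertex V E v \<longleftrightarrow> v \<in> V \<and> card (components (V - {v}) E) > card (components V E)"

definition nbhd :: "'a set \<Rightarrow> ('a \<Rightarrow> 'a \<Rightarrow> bool) \<Rightarrow> 'a \<Rightarrow> 'a set" where
  "nbhd V E x = {y \<in> V. E x y}"

definition universal_vertex :: "'a set \<Rightarrow> ('a \<Rightarrow> 'a \<Rightarrow> bool) \<Rightarrow> 'a set \<Rightarrow> 'a set \<Rightarrow> 'a \<Rightarrow> bool" where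
  "universal_vertex V E X Y v \<longleftrightarrow>
     (v \<in> X \<and> (\<forall>y\<in>Y. E v y)) \<or> (v \<in> Y \<and> (\<forall>x\<in>X. E x v))"

definition biclique :: "('a \<Rightarrow> 'a \<Rightarrow> bool) \<Rightarrow> 'a set \<Rightarrow> 'a set \<Rightarrow> 'a set \<times> 'a set \<Rightarrow> bool" where
  "biclique E X Y B \<longleftrightarrow> fst B \<subseteq> X \<and> snd B \<subseteq> Y \<and> (\<forall>u\<in>fst B. \<forall>w\<in>snd B. E u w)"

definition max_bicliques :: "('a \<Rightarrow> 'a \<Rightarrow> bool) \<Rightarrow> 'a set \<Rightarrow> 'a set \<Rightarrow> ('a set \<times> 'a set) set" where
  "max_bicliques E X Y = {B. biclique E X Y B \<and>
     (\<forall>B'. biclique E X Y B' \<and> fst B \<subseteq> fst B' \<and> snd B \<subseteq> snd B' \<longrightarrow> B' = B)}"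

end

theory Submission imports Defs begin

text \<open>
  Removing a vertex x \<in> X keeps G connected exactly when some other x' \<in> X satisfies
  N(x) \<subseteq> N(x'), and the latter is exactly the failure of maximality of the biclique
  ({x}, N(x)). One direction is immediate: walks through x can be rerouted through x'.
  Conversely, if G - x is connected, pick x' \<in> X - {x} sharing as many neighbours with x
  as possible. Were some y \<in> N(x) missing from N(x'), distance heredity applied to G - x
  yields a common neighbour m of y and of some y0 \<in> N(x) \<inter> N(x'); maximality of x'
  yields y1 \<in> N(x) \<inter> N(x') not adjacent to m; and then the path y1 x' y0 m y induces a
  subgraph in which y1 and y, at distance 2 in G via x, are at distance 4.
\<close>

lemma walk_in_singleton [simp]: "walk_in S E [a] \<longleftrightarrow> a \<in> S"
  unfolding walk_in_def by auto

lemma walk_in_Cons_Cons [simp]: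
  "walk_in S E (a # b # xs) \<longleftrightarrow> a \<in> S \<and> E a b \<and> walk_in S E (b # xs)"
proof -
  have "(\<forall>i. Suc i < length (a # b # xs) \<longrightarrow> E ((a # b # xs) ! i) ((a # b # xs) ! Suc i)) \<longleftrightarrow>
        E a b \<and> (\<forall>i. Suc i < length (b # xs) \<longrightarrow> E ((b # xs) ! i) ((b # xs) ! Suc i))"
    by (auto simp: All_less_Suc2)
  then show ?thesis unfolding walk_in_def by auto
qed

lemma walk_in_append:
  "walk_in S E xs \<Longrightarrow> walk_in S E ys \<Longrightarrow> last xs = hd ys \<Longrightarrow> walk_in S E (xs @ tl ys)"
proof (induction xs rule: induct_list012)
  case 1
  then show ?case by (simp add: walk_in_def)
next
  case (2 x)
  then show ?case by (cases ys) auto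
next
  case (3 x y zs)
  then show ?case by auto
qed

lemma walk_in_rev:
  assumes sym: "\<And>a b. E a b \<Longrightarrow> E b a"
  shows "walk_in S E xs \<Longrightarrow> walk_in S E (rev xs)"
proof (induction xs rule: induct_list012)
  case 1
  then show ?case by (simp add: walk_in_def)
next
  case (2 x)
  then show ?case by simp
next
  case (3 x y zs)
  have "walk_in S E (rev (y # zs))" using 3 by simp
  moreover have "walk_in S E [y, x]" using "3.prems" sym by (auto simp: walk_in_def)
  ultimately have "walk_in S E (rev (y # zs) @ tl [y, x])"
    by (rule walk_in_append) simp
  then show ?case by simp
qed

lemma walk_in_drop: "walk_in S E xs \<Longrightarrow> i < length xs \<Longrightarrow> walk_in S E (drop i xs)"
  unfolding walk_in_def by (auto dest: in_set_dropD)

lemma walk_in_mono: "walk_in S E xs \<Longrightarrow> set xs \<subseteq> T \<Longrightarrow> walk_in T E xs"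
  unfolding walk_in_def by auto

lemma reach_refl: "u \<in> S \<Longrightarrow> reach S E u u"
  unfolding reach_def by (rule exI[of _ "[u]"]) simp

lemma reach_trans:
  assumes "reach S E u v" and "reach S E v w"
  shows "reach S E u w"
proof -
  obtain xs ys where xs: "walk_in S E xs" "hd xs = u" "last xs = v"
    and ys: "walk_in S E ys" "hd ys = v" "last ys = w"
    using assms unfolding reach_def by blast
  have "xs \<noteq> []" "ys \<noteq> []" using xs ys unfolding walk_in_def by auto
  then have "hd (xs @ tl ys) = u" "last (xs @ tl ys) = w"
    using xs ys by (cases ys; auto simp: last_append)+
  with walk_in_append[OF xs(1) ys(1)] xs ys show ?thesis
    unfolding reach_def by auto
qed

lemma reach_sym:
  assumes sym: "\<And>a b. E a b \<Longrightarrow> E b a" and "reach S E u v"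
  shows "reach S E v u"
proof -
  obtain xs where xs: "walk_in S E xs" "hd xs = u" "last xs = v"
    using assms(2) unfolding reach_def by blast
  then have "xs \<noteq> []" unfolding walk_in_def by auto
  with xs walk_in_rev[OF sym xs(1)] show ?thesis
    unfolding reach_def by (auto simp: hd_rev last_rev)
qed

lemma reach_ex_neighbour:
  assumes "reach S E u v" and "u \<noteq> v"
  shows "\<exists>w\<in>S. E u w"
proof -
  obtain xs where xs: "walk_in S E xs" "hd xs = u" "last xs = v"
    using assms(1) unfolding reach_def by blast
  with \<open>u \<noteq> v\<close> obtain w ys where "xs = u # w # ys"
    unfolding walk_in_def by (metis last_ConsL list.collapse)
  with xs(1) have "w \<in> S" "E u w" by (auto simp: walk_in_def)
  then show ?thesis by blast
qed

lemma connected_in_ex_neighbour: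
  "connected_in S E \<Longrightarrow> u \<in> S \<Longrightarrow> v \<in> S \<Longrightarrow> v \<noteq> u \<Longrightarrow> \<exists>w\<in>S. E u w"
  unfolding connected_in_def using reach_ex_neighbour by metis

lemma connected_in_set_walk:
  assumes sym: "\<And>a b. E a b \<Longrightarrow> E b a" and walk: "walk_in S E xs"
  shows "connected_in (set xs) E"
proof -
  have walk': "walk_in (set xs) E xs" using walk_in_mono[OF walk] by simp
  have to_last: "reach (set xs) E u (last xs)" if "u \<in> set xs" for u
  proof -
    obtain i where i: "i < length xs" "xs ! i = u"
      using \<open>u \<in> set xs\<close> by (auto simp: in_set_conv_nth)
    then have "hd (drop i xs) = u" "last (drop i xs) = last xs"
      by (auto simp: hd_drop_conv_nth)
    with walk_in_drop[OF walk' i(1)] show ?thesis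
      unfolding reach_def by blast
  qed
  show ?thesis
  proof (unfold connected_in_def, intro conjI ballI)
    show "set xs \<noteq> {}" using walk unfolding walk_in_def by simp
  next
    fix u v assume "u \<in> set xs" "v \<in> set xs"
    then have "reach (set xs) E u (last xs)" "reach (set xs) E (last xs) v"
      using to_last reach_sym[of E, OF sym] by blast+
    then show "reach (set xs) E u v" by (rule reach_trans)
  qed
qed

subsection \<open>Distances and distance heredity\<close>

lemma dist_in_le_walk:
  assumes "walk_in S E xs" "hd xs = u" "last xs = v"
  shows "dist_in S E u v \<le> length xs - 1"
proof -
  have "xs \<noteq> []" using assms(1) unfolding walk_in_def by simp
  then show ?thesis
    unfolding dist_in_def using assms by (intro Least_le exI[of _ xs]) simp
qed

lemma reach_shortest_walk:
  assumes "reach S E u v"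
  obtains xs where "walk_in S E xs" "hd xs = u" "last xs = v" "length xs = Suc (dist_in S E u v)"
proof -
  obtain xs where xs: "walk_in S E xs" "hd xs = u" "last xs = v"
    using assms unfolding reach_def by blast
  then have "length xs = Suc (length xs - 1)" unfolding walk_in_def by simp
  with xs have "\<exists>n xs. walk_in S E xs \<and> hd xs = u \<and> last xs = v \<and> length xs = Suc n" by blast
  from LeastI_ex[OF this] show ?thesis
    using that unfolding dist_in_def by blast
qed

lemma reach_dist_in_le_2:
  assumes "reach S E u v" and "dist_in S E u v \<le> 2"
  shows "u = v \<or> E u v \<or> (\<exists>m\<in>S. E u m \<and> E m v)"
proof -
  obtain xs where xs: "walk_in S E xs" "hd xs = u" "last xs = v"
    and len: "length xs = Suc (dist_in S E u v)"
    using reach_shortest_walk[OF assms(1)] .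
  from len assms(2) consider a where "xs = [a]" | a b where "xs = [a, b]"
    | a b c where "xs = [a, b, c]"
    by (auto simp: length_Suc_conv numeral_2_eq_2 le_Suc_eq)
  then show ?thesis using xs by cases auto
qed

lemma distance_hereditary_common_neighbour:
  assumes dh: "distance_hereditary V E" and S: "S \<subseteq> V" "connected_in S E"
    and uv: "u \<in> S" "v \<in> S" and w: "w \<in> V" "E u w" "E w v"
  shows "u = v \<or> E u v \<or> (\<exists>m\<in>S. E u m \<and> E m v)"
proof (rule reach_dist_in_le_2)
  show "reach S E u v" using S(2) uv unfolding connected_in_def by blast
  have "walk_in V E [u, w, v]" using S(1) uv w by auto
  then have "dist_in V E u v \<le> 2" using dist_in_le_walk[of V E "[u, w, v]" u v] by simp
  moreover have "dist_in S E u v = dist_in V E u v"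
    using dh S uv unfolding distance_hereditary_def by blast
  ultimately show "dist_in S E u v \<le> 2" by simp
qed

lemma distance_hereditary_walk_shortcut:
  assumes dh: "distance_hereditary V E" and sym: "\<And>a b. E a b \<Longrightarrow> E b a"
    and p: "walk_in V E p" and w: "w \<in> V" "E (hd p) w" "E w (last p)"
  shows "hd p = last p \<or> E (hd p) (last p) \<or> (\<exists>m\<in>set p. E (hd p) m \<and> E m (last p))"
proof -
  have "p \<noteq> []" "set p \<subseteq> V" using p unfolding walk_in_def by auto
  with dh connected_in_set_walk[OF sym p] w show ?thesis
    by (intro distance_hereditary_common_neighbour) auto
qed

lemma connected_in_components_eq: "connected_in S E \<Longrightarrow> components S E = {S}"
  unfolding connected_in_def components_def by auto

lemma cut_vertex_iff_disconnected:
  assumes conn: "connected_in V E" and fin: "finite V" and x: "x \<in> V" and ne: "V - {x} \<noteq> {}"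
  shows "cut_vertex V E x \<longleftrightarrow> \<not> connected_in (V - {x}) E"
proof
  assume "cut_vertex V E x"
  then show "\<not> connected_in (V - {x}) E"
    unfolding cut_vertex_def using connected_in_components_eq[OF conn] connected_in_components_eq[of "V - {x}" E]
    by auto
next
  assume "\<not> connected_in (V - {x}) E"
  then obtain u v where uv: "u \<in> V - {x}" "v \<in> V - {x}" "\<not> reach (V - {x}) E u v"
    using ne unfolding connected_in_def by auto
  let ?C = "\<lambda>u. {v \<in> V - {x}. reach (V - {x}) E u v}"
  have "?C u \<noteq> ?C v" using uv reach_refl[of v "V - {x}" E] by auto
  moreover have "{?C u, ?C v} \<subseteq> components (V - {x}) E"
    using uv unfolding components_def by auto
  moreover have "finite (components (V - {x}) E)" unfolding components_def using fin by simp
  ultimately have "card {?C u, ?C v} \<le> card (components (V - {x}) E)"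
    by (intro card_mono)
  with \<open>?C u \<noteq> ?C v\<close> have "2 \<le> card (components (V - {x}) E)" by simp
  then show "cut_vertex V E x" unfolding cut_vertex_def using connected_in_components_eq[OF conn] x by simp
qed

lemma connected_in_Diff_dominated:
  assumes G: "graph V E" and conn: "connected_in V E"
    and x': "x' \<in> V" "x' \<noteq> x" and sub: "nbhd V E x \<subseteq> nbhd V E x'"
  shows "connected_in (V - {x}) E"
proof -
  have edge: "\<And>u v. E u v \<Longrightarrow> u \<in> V \<and> v \<in> V \<and> E v u \<and> u \<noteq> v"
    using G unfolding graph_def by blast
  have dom: "E x b \<Longrightarrow> E x' b" for b using sub edge unfolding nbhd_def by blast
  define g where "g z = (if z = x then x' else z)" for z
  have g_edge: "E a b \<Longrightarrow> E (g a) (g b)" for a b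
    using dom edge unfolding g_def by metis
  have g_walk: "walk_in V E xs \<Longrightarrow> walk_in (V - {x}) E (map g xs)" for xs
  proof (induction xs rule: induct_list012)
    case 1
    then show ?case by (simp add: walk_in_def)
  next
    case (2 a)
    then show ?case using x' by (simp add: g_def)
  next
    case (3 a b r)
    then show ?case using g_edge x' by (simp add: g_def)
  qed
  show ?thesis
  proof (unfold connected_in_def, intro conjI ballI)
    show "V - {x} \<noteq> {}" using x' by auto
  next
    fix u v assume uv: "u \<in> V - {x}" "v \<in> V - {x}"
    then obtain xs where xs: "walk_in V E xs" "hd xs = u" "last xs = v"
      using conn unfolding connected_in_def reach_def by blast
    then have "xs \<noteq> []" unfolding walk_in_def by simp
    then have "hd (map g xs) = u" "last (map g xs) = v"
      using xs uv by (auto simp: g_def hd_map last_map)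
    with g_walk[OF xs(1)] show "reach (V - {x}) E u v" unfolding reach_def by blast
  qed
qed

subsection \<open>Bipartite graphs and maximal bicliques\<close>

definition nbhd_dominated :: "'a set \<Rightarrow> ('a \<Rightarrow> 'a \<Rightarrow> bool) \<Rightarrow> 'a set \<Rightarrow> 'a \<Rightarrow> bool" where
  "nbhd_dominated V E A x \<longleftrightarrow> (\<exists>x'\<in>A. x' \<noteq> x \<and> nbhd V E x \<subseteq> nbhd V E x')"

lemma bipartite_swap: "bipartite V E X Y \<Longrightarrow> bipartite V E Y X"
  unfolding bipartite_def by auto

lemma bipartite_edge_sideD: "bipartite V E X Y \<Longrightarrow> E u v \<Longrightarrow> u \<in> X \<Longrightarrow> v \<in> Y"
  unfolding bipartite_def by blast

lemma bipartite_edge_symD: "bipartite V E X Y \<Longrightarrow> E u v \<Longrightarrow> E v u"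
  unfolding bipartite_def graph_def by blast

lemma max_bicliques_swap:
  assumes sym: "\<And>a b. E a b \<Longrightarrow> E b a"
  shows "(W, U) \<in> max_bicliques E Y X \<longleftrightarrow> (U, W) \<in> max_bicliques E X Y"
proof -
  have swap: "biclique E Y X (B, A) \<longleftrightarrow> biclique E X Y (A, B)" for A B
    unfolding biclique_def using sym by auto
  show ?thesis
    unfolding max_bicliques_def mem_Collect_eq split_paired_All fst_conv snd_conv swap
    by (metis prod.inject swap)
qed

lemma max_bicliquesI:
  "biclique E X Y (U, W) \<Longrightarrow>
    (\<And>U' W'. biclique E X Y (U', W') \<Longrightarrow> U \<subseteq> U' \<Longrightarrow> W \<subseteq> W' \<Longrightarrow> U' = U \<and> W' = W) \<Longrightarrow>
    (U, W) \<in> max_bicliques E X Y"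
  unfolding max_bicliques_def by auto

lemma max_bicliquesD:
  "(U, W) \<in> max_bicliques E X Y \<Longrightarrow> biclique E X Y (U', W') \<Longrightarrow> U \<subseteq> U' \<Longrightarrow> W \<subseteq> W' \<Longrightarrow>
    U' = U \<and> W' = W"
  unfolding max_bicliques_def by fastforce

lemma singleton_nbhd_max_biclique_iff:
  assumes bip: "bipartite V E X Y" and x: "x \<in> X"
  shows "({x}, nbhd V E x) \<in> max_bicliques E X Y \<longleftrightarrow> \<not> nbhd_dominated V E X x"
proof -
  have V: "X \<union> Y = V" using bip unfolding bipartite_def by blast
  have "nbhd V E x \<subseteq> Y"
    using bipartite_edge_sideD[OF bip] x unfolding nbhd_def by blast
  then have star: "biclique E X Y ({x}, nbhd V E x)"
    using x unfolding biclique_def nbhd_def by simp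
  show ?thesis
  proof
    assume max: "({x}, nbhd V E x) \<in> max_bicliques E X Y"
    show "\<not> nbhd_dominated V E X x"
    proof
      assume "nbhd_dominated V E X x"
      then obtain x' where x': "x' \<in> X" "x' \<noteq> x" "nbhd V E x \<subseteq> nbhd V E x'"
        unfolding nbhd_dominated_def by blast
      then have "E x' w" if "w \<in> nbhd V E x" for w
        using that unfolding nbhd_def by blast
      then have "biclique E X Y ({x, x'}, nbhd V E x)"
        using star x'(1) unfolding biclique_def by simp
      from max_bicliquesD[OF max this] x'(2) show False by auto
    qed
  next
    assume undominated: "\<not> nbhd_dominated V E X x"
    show "({x}, nbhd V E x) \<in> max_bicliques E X Y"
    proof (rule max_bicliquesI[OF star])
      fix U W assume UW: "biclique E X Y (U, W)" and ext: "{x} \<subseteq> U" "nbhd V E x \<subseteq> W"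
      have complete: "u \<in> U \<Longrightarrow> w \<in> W \<Longrightarrow> E u w" for u w
        using UW unfolding biclique_def by simp
      have "W \<subseteq> V" using UW V unfolding biclique_def by auto
      then have "W \<subseteq> nbhd V E x"
        using complete[of x] ext(1) unfolding nbhd_def by blast
      with ext(2) have W: "W = nbhd V E x" by blast
      have "u = x" if "u \<in> U" for u
      proof -
        have "nbhd V E x \<subseteq> nbhd V E u"
          using complete[OF that] W unfolding nbhd_def by blast
        moreover have "u \<in> X" using UW that unfolding biclique_def by auto
        ultimately show ?thesis using undominated unfolding nbhd_dominated_def by auto
      qed
      with ext(1) W show "U = {x} \<and> W = nbhd V E x" by blast
    qed
  qed
qed

subsection \<open>Non-separating vertices of bipartite distance-hereditary graphs\<close>

lemma bdh_max_overlap_dominates: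
  assumes bip: "bipartite V E X Y" and dh: "distance_hereditary V E"
    and conn: "connected_in (V - {x}) E" and x: "x \<in> X"
    and overlap_max: "\<And>z. z \<in> X - {x} \<Longrightarrow>
      card (nbhd V E z \<inter> nbhd V E x) \<le> card (nbhd V E x' \<inter> nbhd V E x)"
    and overlap: "nbhd V E x' \<inter> nbhd V E x \<noteq> {}"
  shows "nbhd V E x \<subseteq> nbhd V E x'"
proof (rule ccontr)
  have G: "graph V E" and XY: "X \<inter> Y = {}" "X \<union> Y = V"
    using bip unfolding bipartite_def by auto
  have edge: "\<And>u v. E u v \<Longrightarrow> u \<in> V \<and> v \<in> V \<and> E v u \<and> u \<noteq> v"
    using G unfolding graph_def by blast
  then have sym: "\<And>u v. E u v \<Longrightarrow> E v u" by blast
  have XY_edge: "E u v \<Longrightarrow> u \<in> X \<Longrightarrow> v \<in> Y" "E u v \<Longrightarrow> u \<in> Y \<Longrightarrow> v \<in> X" for u v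
    using bipartite_edge_sideD[OF bip] bipartite_edge_sideD[OF bipartite_swap[OF bip]] by auto
  have no_YY_edge: "u \<in> Y \<Longrightarrow> v \<in> Y \<Longrightarrow> \<not> E u v" for u v
    using XY_edge XY by blast
  have fin: "finite (nbhd V E z)" for z
    using G unfolding graph_def nbhd_def by simp
  assume "\<not> nbhd V E x \<subseteq> nbhd V E x'"
  then obtain y where y: "E x y" "\<not> E x' y"
    unfolding nbhd_def by blast
  obtain y0 where y0: "E x y0" "E x' y0"
    using overlap unfolding nbhd_def by blast
  have Y: "y \<in> Y" "y0 \<in> Y" using XY_edge y y0 x by auto
  have "y0 \<noteq> y" using y y0 by blast
  then obtain m where m: "m \<in> V - {x}" "E y0 m" "E m y"
    using distance_hereditary_common_neighbour[OF dh _ conn, of y0 y x] no_YY_edge[OF Y(2,1)]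
      y(1) edge[OF y(1)] edge[OF y0(1)] by auto
  have mX: "m \<in> X - {x}" using XY_edge m Y by auto
  obtain y1 where y1: "E x y1" "E x' y1" "\<not> E m y1"
  proof (rule ccontr)
    assume "\<not> thesis"
    with that have "nbhd V E x' \<inter> nbhd V E x \<subseteq> nbhd V E m \<inter> nbhd V E x"
      unfolding nbhd_def by auto
    moreover have "y \<in> nbhd V E m \<inter> nbhd V E x" "y \<notin> nbhd V E x' \<inter> nbhd V E x"
      using y m edge[OF y(1)] unfolding nbhd_def by auto
    ultimately have "card (nbhd V E x' \<inter> nbhd V E x) < card (nbhd V E m \<inter> nbhd V E x)"
      using fin by (intro psubset_card_mono) auto
    with overlap_max[OF mX] show False by simp
  qed
  have "y1 \<in> Y" using XY_edge y1 x by auto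
  have "walk_in V E [y1, x', y0, m, y]"
    using edge[OF y1(2)] y0(2) edge[OF y0(2)] m edge[OF y(1)] by simp
  from distance_hereditary_walk_shortcut[OF dh sym this, of x]
  have "y1 = y \<or> E y1 y \<or> (\<exists>m'\<in>{y1, x', y0, m, y}. E y1 m' \<and> E m' y)"
    using y(1) edge[OF y(1)] edge[OF y1(1)] by simp
  moreover have "y1 \<noteq> y" using y(2) y1(2) by blast
  ultimately obtain m' where m': "m' \<in> {y1, x', y0, m, y}" "E y1 m'" "E m' y"
    using no_YY_edge[OF \<open>y1 \<in> Y\<close> Y(1)] by blast
  have "m' \<in> X" using XY_edge \<open>y1 \<in> Y\<close> m'(2) by blast
  with m'(1) Y \<open>y1 \<in> Y\<close> XY(1) have "m' = x' \<or> m' = m" by auto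
  then show False
    using m'(2,3) y(2) y1(3) sym by blast
qed

lemma card_ge_3_ex_other:
  assumes "finite V" "card V \<ge> 3"
  obtains v where "v \<in> V" "v \<noteq> a" "v \<noteq> b"
proof -
  have "card {a, b} \<le> 2" by (cases "a = b") auto
  with assms(2) have "card {a, b} < card V" by simp
  then have "\<not> V \<subseteq> {a, b}" using card_mono[of "{a, b}" V] by auto
  then show ?thesis using that by blast
qed

lemma bdh_connected_Diff_dominated:
  assumes bip: "bipartite V E X Y" and dh: "distance_hereditary V E"
    and connV: "connected_in V E" and conn: "connected_in (V - {x}) E"
    and x: "x \<in> X" and card: "card V \<ge> 3"
  shows "nbhd_dominated V E X x"
proof -
  have fin: "finite V" and XY: "X \<inter> Y = {}" "X \<union> Y = V" and G: "graph V E"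
    using bip unfolding bipartite_def graph_def by auto
  have edge: "\<And>u v. E u v \<Longrightarrow> u \<in> V \<and> v \<in> V \<and> E v u \<and> u \<noteq> v"
    using G unfolding graph_def by blast
  obtain v where "v \<in> V" "v \<noteq> x" using card_ge_3_ex_other[OF fin card] .
  then obtain y where y: "E x y"
    using connected_in_ex_neighbour[OF connV] x XY by blast
  obtain v' where "v' \<in> V" "v' \<noteq> x" "v' \<noteq> y" using card_ge_3_ex_other[OF fin card] .
  then obtain w where w: "w \<in> V - {x}" "E y w"
    using connected_in_ex_neighbour[OF conn, of y v'] edge[OF y] by auto
  have wX: "w \<in> X - {x}"
    using w bipartite_edge_sideD[OF bipartite_swap[OF bip]] bipartite_edge_sideD[OF bip y] x by blast
  define overlap where "overlap z = card (nbhd V E z \<inter> nbhd V E x)" for z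
  have "finite (X - {x})" using fin XY by auto
  then have "Max (overlap ` (X - {x})) \<in> overlap ` (X - {x})"
    using wX by (intro Max_in) auto
  then obtain x' where x': "x' \<in> X - {x}" "overlap x' = Max (overlap ` (X - {x}))"
    by (metis imageE)
  with \<open>finite (X - {x})\<close> have overlap_max: "overlap z \<le> overlap x'" if "z \<in> X - {x}" for z
    using that by simp
  have "y \<in> nbhd V E w \<inter> nbhd V E x" using y w edge unfolding nbhd_def by auto
  moreover have "finite (nbhd V E w \<inter> nbhd V E x)" using fin unfolding nbhd_def by simp
  ultimately have "overlap w \<noteq> 0" unfolding overlap_def by (auto simp: card_eq_0_iff)
  then have "nbhd V E x' \<inter> nbhd V E x \<noteq> {}"
    using overlap_max[OF wX] unfolding overlap_def by auto
  with overlap_max have "nbhd V E x \<subseteq> nbhd V E x'"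
    using bdh_max_overlap_dominates[OF bip dh conn x] unfolding overlap_def by blast
  with x' show ?thesis unfolding nbhd_dominated_def by blast
qed

lemma bdh_cut_vertex_iff_not_dominated:
  assumes bip: "bipartite V E X Y" and dh: "distance_hereditary V E"
    and conn: "connected_in V E" and card: "card V \<ge> 3" and x: "x \<in> X"
  shows "cut_vertex V E x \<longleftrightarrow> \<not> nbhd_dominated V E X x"
proof -
  have fin: "finite V" and G: "graph V E" and XV: "X \<subseteq> V"
    using bip unfolding bipartite_def graph_def by auto
  obtain v where "v \<in> V - {x}" using card_ge_3_ex_other[OF fin card, of x x] by blast
  then have "cut_vertex V E x \<longleftrightarrow> \<not> connected_in (V - {x}) E"
    using cut_vertex_iff_disconnected[OF conn fin] x XV by blast
  also have "\<dots> \<longleftrightarrow> \<not> nbhd_dominated V E X x"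
    using connected_in_Diff_dominated[OF G conn] bdh_connected_Diff_dominated[OF bip dh conn _ x card]
      XV unfolding nbhd_dominated_def by blast
  finally show ?thesis .
qed

theorem lemma3:
  fixes V X Y :: "'a set" and E :: "'a \<Rightarrow> 'a \<Rightarrow> bool"
  assumes "BDH V E X Y"
    and "connected_in V E"
    and "card V \<ge> 3"
    and "\<forall>v\<in>V. \<not> universal_vertex V E X Y v"
  shows "(\<forall>x\<in>X. cut_vertex V E x \<longleftrightarrow> ({x}, nbhd V E x) \<in> max_bicliques E X Y) \<and>
         (\<forall>y\<in>Y. cut_vertex V E y \<longleftrightarrow> (nbhd V E y, {y}) \<in> max_bicliques E X Y)"
proof -
  have bip: "bipartite V E X Y" and bip': "bipartite V E Y X" and dh: "distance_hereditary V E"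
    using assms(1) bipartite_swap unfolding BDH_def by auto
  have "cut_vertex V E x \<longleftrightarrow> ({x}, nbhd V E x) \<in> max_bicliques E X Y" if "x \<in> X" for x
    using bdh_cut_vertex_iff_not_dominated[OF bip dh assms(2,3) that]
      singleton_nbhd_max_biclique_iff[OF bip that] by simp
  moreover have "cut_vertex V E y \<longleftrightarrow> (nbhd V E y, {y}) \<in> max_bicliques E X Y" if "y \<in> Y" for y
    using bdh_cut_vertex_iff_not_dominated[OF bip' dh assms(2,3) that]
      singleton_nbhd_max_biclique_iff[OF bip' that]
      max_bicliques_swap[of E, OF bipartite_edge_symD[OF bip]] by simp
  ultimately show ?thesis by blast
qed

end
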